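(* Let $p_1<\dots<p_m$ be real numbers with $m\ge3$, let $\mu=\min_{i\ne j}|p_i-p_j|$, and define $\mu_0^2=\big[\sum_{1\le i<j\le m}(p_i-p_j)^{-2}\big]^{-1}$ and $\mu_{k+1}^2=\big(\sum_{1\le i<j\le m}\frac{1}{(p_i-p_j)^2-\mu_{k}^2}\big)^{-1}+\mu_{k}^2$ for $k\ge0$. Then for every $k\ge0$, $$0<\Big[\frac{m-1}{\mu^2/\mu_k^2-1}+\frac34 m\Big]^{-1}<\frac{\mu_{k+1}^2}{\mu_k^2}-1<\frac{\mu^2}{\mu_k^2}-1.$$ *)

theory Defs
  imports Complex_Main
begin

text \<open>Points are indexed 0..m-1 (the paper uses 1..m).\<close>

definition min_gap :: "(nat \<Rightarrow> real) \<Rightarrow> nat \<Rightarrow> real" where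
  "min_gap p m = Min {\<bar>p i - p j\<bar> | i j. i < m \<and> j < m \<and> i \<noteq> j}"

fun mu_sq :: "(nat \<Rightarrow> real) \<Rightarrow> nat \<Rightarrow> nat \<Rightarrow> real" where
  "mu_sq p m 0 = inverse (\<Sum>j<m. \<Sum>i<j. 1 / (p i - p j)^2)"
| "mu_sq p m (Suc k) =
     inverse (\<Sum>j<m. \<Sum>i<j. 1 / ((p i - p j)^2 - mu_sq p m k)) + mu_sq p m k"

end

theory Submission
  imports Defs
begin

text \<open>
  Write \<open>S(x) = \<Sum>\<^sub>i\<^sub><\<^sub>j 1 / ((p\<^sub>i - p\<^sub>j)\<^sup>2 - x)\<close>, so that \<open>\<mu>\<^sub>0\<^sup>2 = 1 / S(0)\<close> and
  \<open>\<mu>\<^sub>k\<^sub>+\<^sub>1\<^sup>2 = \<mu>\<^sub>k\<^sup>2 + 1 / S(\<mu>\<^sub>k\<^sup>2)\<close>. For \<open>0 \<le> x < \<mu>\<^sup>2\<close> all terms of \<open>S(x)\<close> are positive and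
  the pair realising \<open>\<mu>\<close> contributes \<open>1 / (\<mu>\<^sup>2 - x)\<close>, so \<open>1 / S(x) < \<mu>\<^sup>2 - x\<close>; by
  induction every \<open>\<mu>\<^sub>k\<^sup>2\<close> lies in \<open>(0, \<mu>\<^sup>2)\<close>, which gives the upper bound.
  For the lower bound, \<open>|p\<^sub>i - p\<^sub>j| \<ge> |i - j| \<mu>\<close> bounds the \<open>j\<close>-th row of \<open>x S(x)\<close> by
  \<open>x / (\<mu>\<^sup>2 - x) + \<Sum>\<^sub>d\<^sub>\<ge>\<^sub>2 x / (d\<^sup>2 \<mu>\<^sup>2 - x)\<close>, and since \<open>x < \<mu>\<^sup>2\<close> the tail is at most the
  telescoping sum \<open>\<Sum>\<^sub>d\<^sub>\<ge>\<^sub>2 1 / (d\<^sup>2 - 1) = 3/4\<close>.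
\<close>

lemma sum_inverse_shifted_products:
  "(\<Sum>s<n. 1 / (real (s + 1) * real (s + 3))) = 3/4 - 1 / (2 * (real n + 1)) - 1 / (2 * (real n + 2))"
proof (induction n)
  case (Suc n)
  have "1 / (real (n + 1) * real (n + 3)) = 1 / (2 * (real n + 1)) - 1 / (2 * (real n + 3))"
    by (simp add: divide_simps) (simp add: algebra_simps)
  then show ?case using Suc.IH by (simp add: add.commute)
qed simp

lemma sum_inverse_shifted_products_less: "(\<Sum>s<n. 1 / (real (s + 1) * real (s + 3))) < 3/4"
proof -
  have "0 < 1 / (2 * (real n + 1))" "0 < 1 / (2 * (real n + 2))" by simp_all
  then show ?thesis unfolding sum_inverse_shifted_products by linarith
qed

lemma shifted_ratio_le:
  fixes x c t :: real
  assumes "0 \<le> x" "x < c" "1 < t"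
  shows "x / (t * c - x) \<le> 1 / (t - 1)"
proof -
  have "c < t * c" using mult_strict_right_mono[of 1 t c] assms by simp
  then have pos: "0 < t * c - x" using assms by linarith
  have "x * (t - 1) \<le> t * c - x" using assms mult_right_mono[of x c t] by (simp add: algebra_simps)
  then show ?thesis using pos assms by (simp add: pos_divide_le_eq pos_le_divide_eq)
qed

lemma sum_shifted_square_ratios_less:
  fixes x c :: real
  assumes "0 \<le> x" "x < c" "0 < j"
  shows "(\<Sum>d<j. x / ((real d + 1)^2 * c - x)) < x / (c - x) + 3/4"
proof -
  obtain n where j: "j = Suc n" using assms(3) by (cases j) auto
  have "(\<Sum>s<n. x / ((real (Suc s) + 1)^2 * c - x)) \<le> (\<Sum>s<n. 1 / (real (s + 1) * real (s + 3)))"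
  proof (rule sum_mono)
    fix s
    have "(real (Suc s) + 1)^2 - 1 = real (s + 1) * real (s + 3)"
      by (simp add: power2_eq_square algebra_simps)
    then show "x / ((real (Suc s) + 1)^2 * c - x) \<le> 1 / (real (s + 1) * real (s + 3))"
      using shifted_ratio_le[OF assms(1,2), of "(real (Suc s) + 1)^2"] by simp
  qed
  then show ?thesis
    using sum_inverse_shifted_products_less[of n] unfolding j sum.lessThan_Suc_shift by simp
qed

definition gap_resolvent :: "(nat \<Rightarrow> real) \<Rightarrow> nat \<Rightarrow> real \<Rightarrow> real" where
  "gap_resolvent p m x = (\<Sum>j<m. \<Sum>i<j. 1 / ((p i - p j)^2 - x))"

lemma mu_sq_0_eq: "mu_sq p m 0 = inverse (gap_resolvent p m 0)"
  by (simp add: gap_resolvent_def)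

lemma mu_sq_Suc_eq: "mu_sq p m (Suc k) = inverse (gap_resolvent p m (mu_sq p m k)) + mu_sq p m k"
  by (simp add: gap_resolvent_def)

context
  fixes p :: "nat \<Rightarrow> real" and m :: nat
  assumes two_le_m: "2 \<le> m"
    and increasing: "\<And>i j. i < j \<Longrightarrow> j < m \<Longrightarrow> p i < p j"
begin

lemma finite_gaps: "finite {\<bar>p i - p j\<bar> | i j. i < m \<and> j < m \<and> i \<noteq> j}"
  by (rule finite_subset[of _ "(\<lambda>(i, j). \<bar>p i - p j\<bar>) ` ({..<m} \<times> {..<m})"]) auto

lemma min_gap_le:
  assumes "i < j" "j < m"
  shows "min_gap p m \<le> p j - p i"
proof -
  have "\<bar>p j - p i\<bar> \<in> {\<bar>p i - p j\<bar> | i j. i < m \<and> j < m \<and> i \<noteq> j}"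
    using assms by (intro CollectI exI[of _ j] exI[of _ i]) auto
  then have "min_gap p m \<le> \<bar>p j - p i\<bar>"
    unfolding min_gap_def using finite_gaps by (rule Min_le[rotated])
  then show ?thesis using increasing[OF assms] by simp
qed

lemma min_gap_attained: "\<exists>i j. i < j \<and> j < m \<and> min_gap p m = p j - p i"
proof -
  have "\<bar>p 0 - p 1\<bar> \<in> {\<bar>p i - p j\<bar> | i j. i < m \<and> j < m \<and> i \<noteq> j}"
    using two_le_m by (intro CollectI exI[of _ 0] exI[of _ 1]) auto
  then have "{\<bar>p i - p j\<bar> | i j. i < m \<and> j < m \<and> i \<noteq> j} \<noteq> {}" by blast
  then have "min_gap p m \<in> {\<bar>p i - p j\<bar> | i j. i < m \<and> j < m \<and> i \<noteq> j}"
    unfolding min_gap_def using finite_gaps by (rule Min_in[rotated])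
  then obtain i j where ij: "i < m" "j < m" "i \<noteq> j" "min_gap p m = \<bar>p i - p j\<bar>" by auto
  show ?thesis
  proof (cases "i < j")
    case True
    then show ?thesis using ij increasing[of i j] by auto
  next
    case False
    then show ?thesis using ij increasing[of j i] by (intro exI[of _ j] exI[of _ i]) auto
  qed
qed

lemma min_gap_pos: "0 < min_gap p m"
  using min_gap_attained increasing by force

lemma min_gap_spread:
  assumes "i \<le> j" "j < m"
  shows "real (j - i) * min_gap p m \<le> p j - p i"
  using assms(1)
proof (induction j rule: dec_induct)
  case (step n)
  then have "min_gap p m \<le> p (Suc n) - p n" using assms(2) by (intro min_gap_le) auto
  then show ?case using step by (simp add: Suc_diff_le algebra_simps)
qed simp

lemma min_gap_spread_square:
  assumes "i < j" "j < m"
  shows "(real (j - i) * min_gap p m)^2 \<le> (p i - p j)^2"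
proof -
  have "(real (j - i) * min_gap p m)^2 \<le> (p j - p i)^2"
    using min_gap_spread[of i j] min_gap_pos assms by (intro power_mono) auto
  then show ?thesis by (simp add: power2_commute)
qed

lemma gap_resolvent_term_pos:
  assumes "x < (min_gap p m)^2" "i < j" "j < m"
  shows "0 < (p i - p j)^2 - x"
proof -
  have "(min_gap p m)^2 \<le> (p j - p i)^2"
    using min_gap_le[OF assms(2,3)] min_gap_pos by (intro power_mono) auto
  then show ?thesis using assms(1) by (simp add: power2_commute)
qed

lemma inverse_gap_lt_gap_resolvent:
  assumes "3 \<le> m" "0 \<le> x" "x < (min_gap p m)^2"
  shows "1 / ((min_gap p m)^2 - x) < gap_resolvent p m x"
proof -
  define f where "f = (\<lambda>(j, i). 1 / ((p i - p j)^2 - x))"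
  define P where "P = (SIGMA j:{..<m}. {..<j})"
  have f_pos: "0 < f q" if "q \<in> P" for q
    using that gap_resolvent_term_pos[OF assms(3)] by (auto simp: f_def P_def)
  have sum_f: "gap_resolvent p m x = sum f P"
    unfolding gap_resolvent_def P_def f_def by (simp add: sum.Sigma)
  obtain i0 j0 where ij0: "i0 < j0" "j0 < m" "min_gap p m = p j0 - p i0"
    using min_gap_attained by blast
  have f0: "f (j0, i0) = 1 / ((min_gap p m)^2 - x)"
    unfolding f_def ij0(3) by (simp add: power2_commute)
  obtain q where q: "q \<in> P" "q \<noteq> (j0, i0)"
  proof (cases "(j0, i0) = (1, 0)")
    case True
    then show ?thesis using assms(1) that[of "(2, 0)"] by (auto simp: P_def)
  next
    case False
    then show ?thesis using assms(1) that[of "(1, 0)"] by (auto simp: P_def)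
  qed
  have "f (j0, i0) < f (j0, i0) + f q" using f_pos[OF q(1)] by simp
  also have "\<dots> = sum f {(j0, i0), q}" using q(2) by simp
  also have "\<dots> \<le> sum f P"
    using q(1) ij0 f_pos by (intro sum_mono2) (auto simp: P_def intro: less_imp_le)
  finally show ?thesis using f0 sum_f by simp
qed

lemma inverse_gap_resolvent_bounds:
  assumes "3 \<le> m" "0 \<le> x" "x < (min_gap p m)^2"
  shows "0 < inverse (gap_resolvent p m x) \<and> inverse (gap_resolvent p m x) < (min_gap p m)^2 - x"
proof -
  have pos: "0 < 1 / ((min_gap p m)^2 - x)" using assms by simp
  note lt = inverse_gap_lt_gap_resolvent[OF assms]
  then have "inverse (gap_resolvent p m x) < inverse (1 / ((min_gap p m)^2 - x))"
    using pos by (intro less_imp_inverse_less)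
  moreover have "0 < gap_resolvent p m x" using lt pos by linarith
  ultimately show ?thesis by simp
qed

lemma mu_sq_bounds:
  assumes "3 \<le> m"
  shows "0 < mu_sq p m k \<and> mu_sq p m k < (min_gap p m)^2"
proof (induction k)
  case 0
  then show ?case
    using inverse_gap_resolvent_bounds[OF assms, of 0] min_gap_pos unfolding mu_sq_0_eq by simp
next
  case (Suc k)
  then have "0 \<le> mu_sq p m k" "mu_sq p m k < (min_gap p m)^2" by auto
  with inverse_gap_resolvent_bounds[OF assms this] show ?case
    unfolding mu_sq_Suc_eq by (intro conjI) linarith+
qed

lemma gap_resolvent_row_le:
  assumes "0 \<le> x" "x < (min_gap p m)^2" "j < m"
  shows "(\<Sum>i<j. x / ((p i - p j)^2 - x)) \<le> (\<Sum>d<j. x / ((real d + 1)^2 * (min_gap p m)^2 - x))"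
proof -
  have "(\<Sum>i<j. x / ((p i - p j)^2 - x))
      \<le> (\<Sum>i<j. x / ((real (j - Suc i) + 1)^2 * (min_gap p m)^2 - x))"
  proof (rule sum_mono)
    fix i assume "i \<in> {..<j}"
    then have i: "i < j" by simp
    have d: "real (j - Suc i) + 1 = real (j - i)" using i by (simp add: Suc_diff_Suc)
    have "(real (j - Suc i) + 1)^2 * (min_gap p m)^2 - x \<le> (p i - p j)^2 - x"
      using min_gap_spread_square[OF i assms(3)] unfolding d by (simp add: power_mult_distrib)
    moreover have "1 * (min_gap p m)^2 \<le> (real (j - Suc i) + 1)^2 * (min_gap p m)^2"
      by (intro mult_right_mono) auto
    then have "0 < (real (j - Suc i) + 1)^2 * (min_gap p m)^2 - x" using assms(2) by simp
    ultimately show "x / ((p i - p j)^2 - x) \<le> x / ((real (j - Suc i) + 1)^2 * (min_gap p m)^2 - x)"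
      using assms(1) by (intro divide_left_mono) auto
  qed
  also have "\<dots> = (\<Sum>d<j. x / ((real d + 1)^2 * (min_gap p m)^2 - x))"
    by (rule sum.nat_diff_reindex)
  finally show ?thesis .
qed

lemma gap_resolvent_scaled_less:
  assumes "0 \<le> x" "x < (min_gap p m)^2"
  shows "x * gap_resolvent p m x < (real m - 1) * (x / ((min_gap p m)^2 - x)) + 3/4 * real m"
proof -
  define a where "a = x / ((min_gap p m)^2 - x)"
  define row where "row j = (\<Sum>i<j. x / ((p i - p j)^2 - x))" for j
  have "x * gap_resolvent p m x = (\<Sum>j<m. row j)"
    unfolding gap_resolvent_def row_def by (simp add: sum_distrib_left)
  also have "\<dots> = (\<Sum>j\<in>{1..<m}. row j)"
    using two_le_m by (simp add: atLeast0LessThan[symmetric] sum.atLeast_Suc_lessThan row_def)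
  also have "\<dots> < (\<Sum>j\<in>{1..<m}. a + 3/4)"
  proof (rule sum_strict_mono)
    fix j assume "j \<in> {1..<m}"
    then show "row j < a + 3/4"
      using gap_resolvent_row_le[OF assms, of j] sum_shifted_square_ratios_less[OF assms, of j]
      unfolding row_def a_def by simp
  qed (use two_le_m in auto)
  also have "\<dots> \<le> (real m - 1) * a + 3/4 * real m"
    using two_le_m by (simp add: algebra_simps of_nat_diff)
  finally show ?thesis unfolding a_def .
qed

end

theorem mainTheorem8:
  fixes p :: "nat \<Rightarrow> real" and m :: nat and k :: nat
  assumes "m \<ge> 3"
    and "\<And>i j. i < j \<Longrightarrow> j < m \<Longrightarrow> p i < p j"
  shows "0 < inverse ((real m - 1) / ((min_gap p m)^2 / mu_sq p m k - 1) + 3/4 * real m)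
       \<and> inverse ((real m - 1) / ((min_gap p m)^2 / mu_sq p m k - 1) + 3/4 * real m)
           < mu_sq p m (Suc k) / mu_sq p m k - 1
       \<and> mu_sq p m (Suc k) / mu_sq p m k - 1 < (min_gap p m)^2 / mu_sq p m k - 1"
proof -
  have two: "2 \<le> m" using assms(1) by simp
  define x where "x = mu_sq p m k"
  define M where "M = (min_gap p m)^2"
  define S where "S = gap_resolvent p m x"
  have x: "0 < x" "x < M" using mu_sq_bounds[where p=p, OF two assms(2,1)] unfolding x_def M_def by auto
  have next_lt: "mu_sq p m (Suc k) < M" using mu_sq_bounds[where p=p, OF two assms(2,1)] unfolding M_def by blast
  have upper: "x * S < (real m - 1) * (x / (M - x)) + 3/4 * real m"
    using gap_resolvent_scaled_less[OF two assms(2)] x unfolding S_def M_def by simp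
  have xS: "0 < x * S"
    using inverse_gap_resolvent_bounds[OF two assms(2,1)] x unfolding S_def M_def by simp
  have ratio: "mu_sq p m (Suc k) / x - 1 = inverse (x * S)"
    using x unfolding mu_sq_Suc_eq x_def[symmetric] S_def[symmetric] by (simp add: field_simps)
  have "(real m - 1) / (M / x - 1) = (real m - 1) * (x / (M - x))"
    using x by (simp add: field_simps)
  moreover have "inverse ((real m - 1) * (x / (M - x)) + 3/4 * real m) < inverse (x * S)"
    using upper xS by (rule less_imp_inverse_less)
  moreover have "mu_sq p m (Suc k) / x - 1 < M / x - 1"
    using next_lt x by (simp add: divide_strict_right_mono)
  ultimately show ?thesis
    using upper xS unfolding x_def[symmetric] M_def[symmetric] ratio by simp
qed

end
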